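(* Among all $4\times4$ unimodular zerofree matrices $M$, the minimum of $\|(M\;M^{-1})\|$ is $2$. It is attained by $$M=\begin{pmatrix}1&1&1&2\\1&1&2&1\\1&2&2&2\\2&1&2&2\end{pmatrix},\ M^{-1}=\begin{pmatrix}-2&-2&1&2\\-2&-2&2&1\\1&2&-1&-1\\2&1&-1&-1\end{pmatrix}$$ and by $$\tilde M=\begin{pmatrix}1&1&1&2\\-1&1&2&-1\\-2&1&2&-2\\1&2&2&2\end{pmatrix},\ \tilde M^{-1}=\begin{pmatrix}-2&2&-2&1\\-2&-2&1&2\\1&2&-1&-1\\2&-1&1&-1\end{pmatrix},$$ and $M$ and $\tilde M$ are not equivalent.
   Context: A square integer matrix is unimodular if its determinant is $\pm1$. An invertible matrix $Z$ is zerofree if none of the entries of $Z$ and none of the entries of $Z^{-1}$ is zero. For a matrix $A$, $\|A\|$ denotes the maximum of the absolute values of its entries. $(M\;M^{-1})$ denotes the $n\times 2n$ matrix obtained by concatenating $M$ and $M^{-1}$ side by side. Two $n\times n$ matrices $Z,Z'$ are equivalent if $Z'=PZQ$ for some $n\times n$ signed permutation matrices $P,Q$ (permutation matrices whose nonzero entries may be $\pm1$). *)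

theory Defs
  imports "HOL-Analysis.Analysis"
begin

definition unimodular :: "int^'n^'n \<Rightarrow> bool" where
  "unimodular A \<longleftrightarrow> det A = 1 \<or> det A = -1"

definition zerofree :: "int^'n^'n \<Rightarrow> bool" where
  "zerofree Z \<longleftrightarrow> invertible Z \<and> (\<forall>i j. Z$i$j \<noteq> 0) \<and> (\<forall>i j. matrix_inv Z $i$j \<noteq> 0)"

definition maxnorm :: "int^'n^'m \<Rightarrow> int" where
  "maxnorm A = Max {\<bar>A$i$j\<bar> | i j. True}"

text \<open>norm of the n x 2n matrix (M  M^-1)\<close>
definition pairnorm :: "int^'n^'n \<Rightarrow> int" where
  "pairnorm M = max (maxnorm M) (maxnorm (matrix_inv M))"

definition signed_perm :: "int^'n^'n \<Rightarrow> bool" where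
  "signed_perm P \<longleftrightarrow> (\<exists>p. bij p \<and> (\<forall>i j. (P$i$j \<noteq> 0 \<longleftrightarrow> j = p i) \<and> P$i$j \<in> {-1,0,1}))"

definition equivalent_mat :: "int^'n^'n \<Rightarrow> int^'n^'n \<Rightarrow> bool" where
  "equivalent_mat Z Z' \<longleftrightarrow> (\<exists>P Q. signed_perm P \<and> signed_perm Q \<and> Z' = P ** Z ** Q)"

definition M4 :: "int^4^4" where
  "M4 = vector [vector [1,1,1,2], vector [1,1,2,1], vector [1,2,2,2], vector [2,1,2,2]]"
definition M4inv :: "int^4^4" where
  "M4inv = vector [vector [-2,-2,1,2], vector [-2,-2,2,1], vector [1,2,-1,-1], vector [2,1,-1,-1]]"
definition Mt4 :: "int^4^4" where
  "Mt4 = vector [vector [1,1,1,2], vector [-1,1,2,-1], vector [-2,1,2,-2], vector [1,2,2,2]]"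
definition Mt4inv :: "int^4^4" where
  "Mt4inv = vector [vector [-2,2,-2,1], vector [-2,-2,1,2], vector [1,2,-1,-1], vector [2,-1,1,-1]]"

end

theory Submission
  imports Defs
begin

text \<open>
  If no entry of an \<open>n \<times> n\<close> integer matrix is zero and all have absolute value at most 1,
  all entries are odd; the Leibniz expansion of the determinant is then a sum of \<open>n!\<close> odd
  terms, which is even for \<open>n \<ge> 2\<close>, so the matrix is not unimodular.
  Multiplying by signed permutation matrices permutes rows and columns and flips the signs of
  whole rows and columns, so the product of the four entries of a \<open>2 \<times> 2\<close> submatrix keeps its
  sign.  All entries of \<open>M4\<close> are positive, whereas the leading \<open>2 \<times> 2\<close> block of \<open>Mt4\<close> has
  entry product \<open>-1\<close>; hence the two are not equivalent.
\<close>

lemma vector_4 [simp]: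
  "(vector [a, b, c, d] :: ('a::zero)^4) $ 1 = a"
  "(vector [a, b, c, d] :: ('a::zero)^4) $ 2 = b"
  "(vector [a, b, c, d] :: ('a::zero)^4) $ 3 = c"
  "(vector [a, b, c, d] :: ('a::zero)^4) $ 4 = d"
  unfolding vector_def by simp_all

lemma matrix_inv_unique:
  fixes A B :: "'a::semiring_1^'n^'n"
  assumes "A ** B = mat 1" and "B ** A = mat 1"
  shows "matrix_inv A = B"
proof -
  have "A ** matrix_inv A = mat 1 \<and> matrix_inv A ** A = mat 1"
    unfolding matrix_inv_def by (rule someI[of _ B]) (use assms in blast)
  then have "matrix_inv A = matrix_inv A ** (A ** B)"
    using assms(1) by simp
  also have "\<dots> = B"
    using \<open>A ** matrix_inv A = mat 1 \<and> matrix_inv A ** A = mat 1\<close>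
    by (simp add: matrix_mul_assoc)
  finally show ?thesis .
qed

lemma unimodular_if_right_inverse:
  fixes A B :: "int^'n^'n"
  assumes "A ** B = mat 1"
  shows "unimodular A"
proof -
  have "det A * det B = 1"
    using assms det_mul[of A B] by simp
  then show ?thesis
    unfolding unimodular_def using zmult_eq_1_iff by blast
qed

lemma zerofree_if_inverse:
  fixes A B :: "int^'n^'n"
  assumes "A ** B = mat 1" and "B ** A = mat 1"
    and "\<forall>i j. A $ i $ j \<noteq> 0" and "\<forall>i j. B $ i $ j \<noteq> 0"
  shows "zerofree A"
  unfolding zerofree_def invertible_def matrix_inv_unique[OF assms(1,2)]
  using assms by blast

lemma finite_abs_entries: "finite {\<bar>A $ i $ j\<bar> | i j. True}"
  for A :: "int^'n^'m"
proof -
  have "{\<bar>A $ i $ j\<bar> | i j. True} = (\<lambda>(i, j). \<bar>A $ i $ j\<bar>) ` UNIV"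
    by auto
  then show ?thesis by simp
qed

lemma abs_entry_le_maxnorm: "\<bar>A $ i $ j\<bar> \<le> maxnorm A"
  unfolding maxnorm_def by (rule Max_ge[OF finite_abs_entries]) auto

lemma maxnorm_eqI:
  fixes A :: "int^'n^'m"
  assumes "\<forall>i j. \<bar>A $ i $ j\<bar> \<le> c" and "\<bar>A $ a $ b\<bar> = c"
  shows "maxnorm A = c"
  unfolding maxnorm_def by (rule Max_eqI[OF finite_abs_entries]) (use assms in auto)

lemma even_det_if_odd_entries:
  fixes A :: "int^'n^'n"
  assumes "CARD('n) \<ge> 2" and "\<forall>i j. odd (A $ i $ j)"
  shows "even (det A)"
proof -
  let ?S = "{p. p permutes (UNIV :: 'n set)}"
  let ?term = "\<lambda>p. sign p * (\<Prod>i\<in>UNIV. A $ i $ p i)"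
  have odd_terms: "odd (?term p)" for p
  proof -
    have "odd (sign p)"
      by (cases p rule: sign_cases) auto
    moreover have "odd (\<Prod>i\<in>UNIV. A $ i $ p i)"
      using assms(2) by (simp add: even_prod_iff)
    ultimately show ?thesis by simp
  qed
  have "(2::nat) dvd fact CARD('n)"
    using assms(1) by (intro dvd_fact) auto
  then have "even (card ?S)"
    by (simp add: card_permutations)
  then have "even (\<Sum>p\<in>?S. ?term p)"
    using odd_terms by (simp add: even_sum_iff finite_permutations)
  then show ?thesis
    unfolding det_def by simp
qed

lemma two_le_maxnorm_if_unimodular:
  fixes A :: "int^'n^'n"
  assumes "CARD('n) \<ge> 2" and "unimodular A" and "\<forall>i j. A $ i $ j \<noteq> 0"
  shows "maxnorm A \<ge> 2"
proof (rule ccontr)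
  assume "\<not> maxnorm A \<ge> 2"
  have "A $ i $ j \<in> {-1, 1}" for i j
  proof -
    have "\<bar>A $ i $ j\<bar> \<le> 1"
      using abs_entry_le_maxnorm[of A i j] \<open>\<not> maxnorm A \<ge> 2\<close> by simp
    moreover have "A $ i $ j \<noteq> 0"
      using assms(3) by blast
    ultimately show ?thesis by auto
  qed
  then have "odd (A $ i $ j)" for i j
    by (metis empty_iff even_minus insert_iff odd_one)
  then have "even (det A)"
    using even_det_if_odd_entries[OF assms(1)] by blast
  with assms(2) show False
    unfolding unimodular_def by auto
qed

lemma two_le_pairnorm_if_unimodular_zerofree:
  fixes M :: "int^'n^'n"
  assumes "CARD('n) \<ge> 2" and "unimodular M" and "zerofree M"
  shows "pairnorm M \<ge> 2"
proof -
  have "maxnorm M \<ge> 2"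
    using assms by (intro two_le_maxnorm_if_unimodular) (auto simp: zerofree_def)
  then show ?thesis
    unfolding pairnorm_def by simp
qed

lemma signed_perm_rowsD:
  fixes P :: "int^'n^'n"
  assumes "signed_perm P"
  obtains p s where "\<forall>i. s i \<in> {-1, 1}" and "\<forall>i j. P $ i $ j = (if j = p i then s i else 0)"
proof -
  obtain p where p: "\<forall>i j. (P $ i $ j \<noteq> 0 \<longleftrightarrow> j = p i) \<and> P $ i $ j \<in> {-1, 0, 1}"
    using assms unfolding signed_perm_def by blast
  show ?thesis
    by (rule that[of "\<lambda>i. P $ i $ p i" p]) (use p in fastforce)+
qed

lemma signed_perm_colsD:
  fixes Q :: "int^'n^'n"
  assumes "signed_perm Q"
  obtains r t where "\<forall>j. t j \<in> {-1, 1}" and "\<forall>i j. Q $ i $ j = (if i = r j then t j else 0)"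
proof -
  obtain q where "bij q" and q: "\<forall>i j. (Q $ i $ j \<noteq> 0 \<longleftrightarrow> j = q i) \<and> Q $ i $ j \<in> {-1, 0, 1}"
    using assms unfolding signed_perm_def by blast
  have inv_q: "i = inv q j \<longleftrightarrow> j = q i" for i j
    using \<open>bij q\<close> by (metis bij_inv_eq_iff)
  show ?thesis
    by (rule that[of "\<lambda>j. Q $ inv q j $ j" "inv q"]) (use q inv_q in fastforce)+
qed

lemma matrix_mul_monomial_left:
  fixes A :: "'a::semiring_1^'k^'n"
  assumes "\<forall>i j. P $ i $ j = (if j = p i then s i else 0)"
  shows "(P ** A) $ i $ j = s i * A $ p i $ j"
proof -
  have "(P ** A) $ i $ j = (\<Sum>k\<in>UNIV. if k = p i then s i * A $ k $ j else 0)"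
    unfolding matrix_matrix_mult_def vec_lambda_beta by (intro sum.cong) (simp_all add: assms)
  then show ?thesis by simp
qed

lemma matrix_mul_monomial_right:
  fixes A :: "'a::semiring_1^'n^'k"
  assumes "\<forall>i j. Q $ i $ j = (if i = r j then t j else 0)"
  shows "(A ** Q) $ i $ j = A $ i $ r j * t j"
proof -
  have "(A ** Q) $ i $ j = (\<Sum>k\<in>UNIV. if k = r j then A $ i $ k * t j else 0)"
    unfolding matrix_matrix_mult_def vec_lambda_beta by (intro sum.cong) (simp_all add: assms)
  then show ?thesis by simp
qed

lemma equivalent_mat_entries:
  fixes Z Z' :: "int^'n^'n"
  assumes "equivalent_mat Z Z'"
  obtains p r s t where "\<forall>i. s i \<in> {-1, 1}" and "\<forall>j. t j \<in> {-1, 1}"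
    and "\<forall>i j. Z' $ i $ j = s i * t j * Z $ p i $ r j"
proof -
  obtain P Q where "signed_perm P" "signed_perm Q" and Z': "Z' = P ** Z ** Q"
    using assms unfolding equivalent_mat_def by blast
  obtain p s where s: "\<forall>i. s i \<in> {-1, 1}" and P: "\<forall>i j. P $ i $ j = (if j = p i then s i else 0)"
    using signed_perm_rowsD[OF \<open>signed_perm P\<close>] .
  obtain r t where t: "\<forall>j. t j \<in> {-1, 1}" and Q: "\<forall>i j. Q $ i $ j = (if i = r j then t j else 0)"
    using signed_perm_colsD[OF \<open>signed_perm Q\<close>] .
  have "\<forall>i j. Z' $ i $ j = s i * t j * Z $ p i $ r j"
    by (simp add: Z' matrix_mul_monomial_right[OF Q] matrix_mul_monomial_left[OF P])
  with s t show ?thesis by (rule that)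
qed

lemma equivalent_mat_rectangle_product:
  fixes Z Z' :: "int^'n^'n"
  assumes "equivalent_mat Z Z'"
  obtains p r where "\<forall>i k j l. Z' $ i $ j * Z' $ i $ l * Z' $ k $ j * Z' $ k $ l
    = Z $ p i $ r j * Z $ p i $ r l * Z $ p k $ r j * Z $ p k $ r l"
proof -
  obtain p r s t where s: "\<forall>i. s i \<in> {-1, 1}" and t: "\<forall>j. t j \<in> {-1, 1}"
    and Z': "\<forall>i j. Z' $ i $ j = s i * t j * Z $ p i $ r j"
    using equivalent_mat_entries[OF assms] .
  have "s i * s i = 1" and "t j * t j = 1" for i j
    using s[rule_format, of i] t[rule_format, of j] by auto
  moreover have "Z' $ i $ j * Z' $ i $ l * Z' $ k $ j * Z' $ k $ l
      = (s i * s i) * (s k * s k) * (t j * t j) * (t l * t l)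
        * (Z $ p i $ r j * Z $ p i $ r l * Z $ p k $ r j * Z $ p k $ r l)" for i k j l
    unfolding Z'[rule_format] by (simp only: mult_ac)
  ultimately have "\<forall>i k j l. Z' $ i $ j * Z' $ i $ l * Z' $ k $ j * Z' $ k $ l
      = Z $ p i $ r j * Z $ p i $ r l * Z $ p k $ r j * Z $ p k $ r l"
    by simp
  then show ?thesis by (rule that)
qed

lemma M4_mult_M4inv: "M4 ** M4inv = mat 1"
  and M4inv_mult_M4: "M4inv ** M4 = mat 1"
  and Mt4_mult_Mt4inv: "Mt4 ** Mt4inv = mat 1"
  and Mt4inv_mult_Mt4: "Mt4inv ** Mt4 = mat 1"
  unfolding vec_eq_iff forall_4
  by (simp_all add: M4_def M4inv_def Mt4_def Mt4inv_def matrix_matrix_mult_def sum_4 mat_def)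

lemma matrix_inv_M4: "matrix_inv M4 = M4inv"
  using M4_mult_M4inv M4inv_mult_M4 by (rule matrix_inv_unique)

lemma matrix_inv_Mt4: "matrix_inv Mt4 = Mt4inv"
  using Mt4_mult_Mt4inv Mt4inv_mult_Mt4 by (rule matrix_inv_unique)

lemma zerofree_M4: "zerofree M4"
  by (rule zerofree_if_inverse[OF M4_mult_M4inv M4inv_mult_M4])
    (simp_all add: forall_4 M4_def M4inv_def)

lemma zerofree_Mt4: "zerofree Mt4"
  by (rule zerofree_if_inverse[OF Mt4_mult_Mt4inv Mt4inv_mult_Mt4])
    (simp_all add: forall_4 Mt4_def Mt4inv_def)

lemma pairnorm_M4: "pairnorm M4 = 2"
proof -
  have "maxnorm M4 = 2"
    by (rule maxnorm_eqI[where a = 1 and b = 4]) (simp_all add: forall_4 M4_def)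
  moreover have "maxnorm M4inv = 2"
    by (rule maxnorm_eqI[where a = 1 and b = 1]) (simp_all add: forall_4 M4inv_def)
  ultimately show ?thesis
    unfolding pairnorm_def matrix_inv_M4 by simp
qed

lemma pairnorm_Mt4: "pairnorm Mt4 = 2"
proof -
  have "maxnorm Mt4 = 2"
    by (rule maxnorm_eqI[where a = 1 and b = 4]) (simp_all add: forall_4 Mt4_def)
  moreover have "maxnorm Mt4inv = 2"
    by (rule maxnorm_eqI[where a = 1 and b = 1]) (simp_all add: forall_4 Mt4inv_def)
  ultimately show ?thesis
    unfolding pairnorm_def matrix_inv_Mt4 by simp
qed

lemma not_equivalent_M4_Mt4: "\<not> equivalent_mat M4 Mt4"
proof
  assume "equivalent_mat M4 Mt4"
  then obtain p r where rect: "\<forall>i k j l. Mt4 $ i $ j * Mt4 $ i $ l * Mt4 $ k $ j * Mt4 $ k $ l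
      = M4 $ p i $ r j * M4 $ p i $ r l * M4 $ p k $ r j * M4 $ p k $ r l"
    by (rule equivalent_mat_rectangle_product)
  have positive: "\<forall>i j. M4 $ i $ j > 0"
    by (simp add: forall_4 M4_def)
  have "Mt4 $ 1 $ 1 * Mt4 $ 1 $ 2 * Mt4 $ 2 $ 1 * Mt4 $ 2 $ 2 > 0"
    unfolding rect[rule_format] using positive by (simp add: mult_pos_pos)
  moreover have "Mt4 $ 1 $ 1 * Mt4 $ 1 $ 2 * Mt4 $ 2 $ 1 * Mt4 $ 2 $ 2 = -1"
    by (simp add: Mt4_def)
  ultimately show False by simp
qed

theorem mainTheorem10:
  shows "(\<forall>M :: int^4^4. unimodular M \<and> zerofree M \<longrightarrow> pairnorm M \<ge> 2)
    \<and> unimodular M4 \<and> zerofree M4 \<and> matrix_inv M4 = M4inv \<and> pairnorm M4 = 2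
    \<and> unimodular Mt4 \<and> zerofree Mt4 \<and> matrix_inv Mt4 = Mt4inv \<and> pairnorm Mt4 = 2
    \<and> \<not> equivalent_mat M4 Mt4"
  using two_le_pairnorm_if_unimodular_zerofree[where 'n = 4]
    unimodular_if_right_inverse[OF M4_mult_M4inv] unimodular_if_right_inverse[OF Mt4_mult_Mt4inv]
    zerofree_M4 zerofree_Mt4 matrix_inv_M4 matrix_inv_Mt4 pairnorm_M4 pairnorm_Mt4
    not_equivalent_M4_Mt4
  by simp

end
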